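(* Fix $n\ge 2$ and a positive integer $m_0$, and let $(\lambda^{(m)})_{m\ge m_0}$ be a sequence with $\lambda^{(m)}\in\mathbb{R}^{mn}$. Set $H^{(m)}=U(m)\,\mathrm{diag}(\lambda^{(m)})\,U(m)^\dagger$, where $U(m)$ is an $mn\times mn$ Haar-distributed unitary. Suppose that the measures $\mu[\lambda^{(m)}]$ all have support in some bounded interval $[-K,K]$, satisfy a uniform bound $|M_r(\mu[\lambda^{(m)}])|<C$ for all $r$ and $m$, and converge weakly to a probability measure $\mu$. Then, as $m\to\infty$, the random $n\times n$ matrix $\pi_2(m^{-1}H^{(m)})$ converges in probability to $M_1(\mu)I_n$, where $I_n$ is the $n\times n$ identity matrix.
   Context: For $mn\times mn$ matrices with rows/columns indexed lexicographically by double indices $ij$ ($1\le i\le m$, $1\le j\le n$), $\pi_2(H)_{j,l}=\sum_{i=1}^mH_{ij,il}$. The empirical spectral measure of $\lambda\in\mathbb{R}^{mn}$ is $\mu[\lambda]=\frac{1}{mn}\sum_{ij}\delta_{\lambda_{ij}}$ (Dirac masses). $M_r(\nu)=\int x^r\,d\nu(x)$. *)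

theory Defs
  imports "HOL-Probability.Probability"
begin

text \<open>Square N x N complex matrices are represented as functions
  nat => nat => complex whose entries vanish outside {..<N} x {..<N}
  (0-based indices). The function type carries the product topology,
  hence a Borel sigma algebra.\<close>

definition cmat :: "nat \<Rightarrow> (nat \<Rightarrow> nat \<Rightarrow> complex) \<Rightarrow> bool" where
  "cmat N A \<longleftrightarrow> (\<forall>i j. (N \<le> i \<or> N \<le> j) \<longrightarrow> A i j = 0)"

definition cmat_mult :: "nat \<Rightarrow> (nat \<Rightarrow> nat \<Rightarrow> complex) \<Rightarrow> (nat \<Rightarrow> nat \<Rightarrow> complex)
    \<Rightarrow> (nat \<Rightarrow> nat \<Rightarrow> complex)" where
  "cmat_mult N A B = (\<lambda>i j. if i < N \<and> j < N then (\<Sum>k<N. A i k * B k j) else 0)"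

definition unitary_cmat :: "nat \<Rightarrow> (nat \<Rightarrow> nat \<Rightarrow> complex) \<Rightarrow> bool" where
  "unitary_cmat N U \<longleftrightarrow> cmat N U \<and>
     (\<forall>i<N. \<forall>j<N. (\<Sum>k<N. cnj (U k i) * U k j) = (if i = j then 1 else 0))"

definition haar_unitary :: "nat \<Rightarrow> (nat \<Rightarrow> nat \<Rightarrow> complex) measure \<Rightarrow> bool" where
  "haar_unitary N Q \<longleftrightarrow> prob_space Q \<and> sets Q = sets borel \<and>
     (AE U in Q. unitary_cmat N U) \<and>
     (\<forall>V. unitary_cmat N V \<longrightarrow> distr Q borel (\<lambda>U. cmat_mult N V U) = Q)"

definition conj_diag :: "nat \<Rightarrow> (nat \<Rightarrow> nat \<Rightarrow> complex) \<Rightarrow> (nat \<Rightarrow> real)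
    \<Rightarrow> (nat \<Rightarrow> nat \<Rightarrow> complex)" where
  "conj_diag N U lam = (\<lambda>i k. if i < N \<and> k < N
      then (\<Sum>p<N. U i p * complex_of_real (lam p) * cnj (U k p)) else 0)"

text \<open>Partial trace pi_2 for an (m n) x (m n) matrix, double index ij
  (0-based i<m, j<n) corresponding to the linear index i*n+j.\<close>

definition pi2 :: "nat \<Rightarrow> nat \<Rightarrow> (nat \<Rightarrow> nat \<Rightarrow> complex) \<Rightarrow> (nat \<Rightarrow> nat \<Rightarrow> complex)" where
  "pi2 m n H = (\<lambda>j l. if j < n \<and> l < n then (\<Sum>i<m. H (i*n+j) (i*n+l)) else 0)"

definition emp_measure :: "nat \<Rightarrow> (nat \<Rightarrow> real) \<Rightarrow> real measure" where
  "emp_measure N lam = measure_pmf (map_pmf lam (pmf_of_set {..<N}))"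

definition moment :: "real measure \<Rightarrow> nat \<Rightarrow> real" where
  "moment \<nu> r = (\<integral>x. x ^ r \<partial>\<nu>)"

end

theory Submission
  imports Defs "HOL-Combinatorics.Permutations"
begin

text \<open>
  Write \<open>H = U diag(\<lambda>) U\<^sup>\<dagger>\<close>, \<open>N = m n\<close>, and let \<open>c\<^sub>N\<close> be the mean of the \<open>\<lambda>\<^sub>p\<close>.
  Only two symmetries of Haar measure are needed: invariance under left multiplication by
  a diagonal sign matrix and by a permutation matrix. Flipping the sign of one row shows that
  the off-diagonal entries summed in an off-diagonal entry of \<open>\<pi>\<^sub>2(H)\<close> are uncorrelated;
  permuting rows shows that the centred diagonal entries \<open>H\<^sub>a\<^sub>a - c\<^sub>N\<close> are exchangeable,
  and since they sum to zero their common covariance is nonpositive. In both cases the second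
  moment of an entry of \<open>\<pi>\<^sub>2(H) - m c\<^sub>N I\<close> is at most \<open>\<parallel>H\<parallel>\<^sub>F\<^sup>2 = \<Sum> \<lambda>\<^sub>p\<^sup>2 \<le> N K\<^sup>2\<close>,
  so after dividing by \<open>m\<close> it is \<open>O(n / m)\<close>. Chebyshev's inequality and
  \<open>c\<^sub>N \<rightarrow> M\<^sub>1(\<mu>)\<close>, which follows from weak convergence and the uniform support bound,
  finish the proof.
\<close>

lemma complex_of_real_cmod_square: "complex_of_real (cmod z ^ 2) = cnj z * z"
  by (metis complex_norm_square mult.commute)

lemma cmod_square_eq_Re_mult_cnj: "cmod z ^ 2 = Re (z * cnj z)"
  by (metis Re_complex_of_real complex_norm_square)

lemma cmod_sum_square: "cmod (\<Sum>i\<in>I. z i) ^ 2 = (\<Sum>i\<in>I. \<Sum>k\<in>I. Re (z i * cnj (z k)))"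
  by (simp add: cmod_square_eq_Re_mult_cnj[of "sum z I"] sum_product)

lemma square_add_le: "((x::real) + y) ^ 2 \<le> 2 * x ^ 2 + 2 * y ^ 2"
proof -
  have "0 \<le> (x - y) ^ 2"
    by simp
  then show ?thesis
    by (simp add: power2_eq_square algebra_simps)
qed

lemma sum_power2_le_of_abs_le:
  fixes x :: "nat \<Rightarrow> real"
  assumes "\<And>p. p < N \<Longrightarrow> \<bar>x p\<bar> \<le> K"
  shows "(\<Sum>p<N. x p ^ 2) \<le> N * K\<^sup>2"
proof -
  have "(\<Sum>p<N. x p ^ 2) \<le> (\<Sum>p<N. K\<^sup>2)"
    using assms by (intro sum_mono) (metis abs_ge_zero lessThan_iff power2_abs power_mono)
  then show ?thesis
    by simp
qed

lemma sum_square_deviation_le: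
  fixes h :: "'i \<Rightarrow> real"
  assumes "(\<Sum>a\<in>A. h a) = real (card A) * c"
  shows "(\<Sum>a\<in>A. (h a - c) ^ 2) \<le> (\<Sum>a\<in>A. h a ^ 2)"
proof -
  have "(\<Sum>a\<in>A. (h a - c) ^ 2) = (\<Sum>a\<in>A. h a ^ 2 - 2 * c * h a + c ^ 2)"
    by (intro sum.cong refl) (simp add: power2_diff)
  also have "\<dots> = (\<Sum>a\<in>A. h a ^ 2) - 2 * c * (\<Sum>a\<in>A. h a) + real (card A) * c ^ 2"
    by (simp add: sum.distrib sum_subtractf sum_distrib_left)
  also have "\<dots> = (\<Sum>a\<in>A. h a ^ 2) - real (card A) * c ^ 2"
    using assms by (simp add: power2_eq_square)
  also have "\<dots> \<le> (\<Sum>a\<in>A. h a ^ 2)"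
    by simp
  finally show ?thesis .
qed

lemma integral_sum_square:
  fixes d :: "'i \<Rightarrow> 'a \<Rightarrow> real"
  assumes "finite A" and "\<And>a b. a \<in> A \<Longrightarrow> b \<in> A \<Longrightarrow> integrable M (\<lambda>x. d a x * d b x)"
  shows "integrable M (\<lambda>x. (\<Sum>a\<in>A. d a x) ^ 2)"
    and "(\<integral>x. (\<Sum>a\<in>A. d a x) ^ 2 \<partial>M) = (\<Sum>a\<in>A. \<Sum>b\<in>A. \<integral>x. d a x * d b x \<partial>M)"
  using assms by (simp_all add: power2_eq_square sum_product integrable_sum)

lemma integral_sum_square_of_exchangeable:
  fixes d :: "'i \<Rightarrow> 'a \<Rightarrow> real"
  assumes B: "finite B"
    and int: "\<And>a b. a \<in> B \<Longrightarrow> b \<in> B \<Longrightarrow> integrable M (\<lambda>x. d a x * d b x)"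
    and exch: "\<And>a b. a \<in> B \<Longrightarrow> b \<in> B \<Longrightarrow> a \<noteq> b \<Longrightarrow> (\<integral>x. d a x * d b x \<partial>M) = \<gamma>"
  shows "(\<integral>x. (\<Sum>a\<in>B. d a x) ^ 2 \<partial>M)
      = (\<Sum>a\<in>B. \<integral>x. d a x ^ 2 \<partial>M) + real (card B) * (real (card B) - 1) * \<gamma>"
proof -
  have row: "(\<Sum>b\<in>B. \<integral>x. d a x * d b x \<partial>M) = (\<integral>x. d a x ^ 2 \<partial>M) + (real (card B) - 1) * \<gamma>"
    if a: "a \<in> B" for a
  proof -
    have "(\<Sum>b\<in>B. \<integral>x. d a x * d b x \<partial>M)
        = (\<integral>x. d a x * d a x \<partial>M) + (\<Sum>b\<in>B - {a}. \<integral>x. d a x * d b x \<partial>M)"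
      using B a by (simp add: sum.remove)
    also have "(\<Sum>b\<in>B - {a}. \<integral>x. d a x * d b x \<partial>M) = (\<Sum>b\<in>B - {a}. \<gamma>)"
      using a by (intro sum.cong refl exch) auto
    moreover have "0 < card B"
      using B a card_gt_0_iff by blast
    ultimately show ?thesis
      using B a by (simp add: power2_eq_square card_Diff_singleton)
  qed
  have "(\<integral>x. (\<Sum>a\<in>B. d a x) ^ 2 \<partial>M) = (\<Sum>a\<in>B. \<Sum>b\<in>B. \<integral>x. d a x * d b x \<partial>M)"
    using B int by (rule integral_sum_square(2))
  also have "\<dots> = (\<Sum>a\<in>B. (\<integral>x. d a x ^ 2 \<partial>M) + (real (card B) - 1) * \<gamma>)"
    by (rule sum.cong[OF refl row])
  finally show ?thesis
    by (simp add: sum.distrib)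
qed

lemma integral_sum_square_le_of_exchangeable:
  fixes d :: "'i \<Rightarrow> 'a \<Rightarrow> real"
  assumes I: "finite I" and A: "A \<subseteq> I"
    and int: "\<And>a b. a \<in> I \<Longrightarrow> b \<in> I \<Longrightarrow> integrable M (\<lambda>x. d a x * d b x)"
    and exch: "\<And>a b. a \<in> I \<Longrightarrow> b \<in> I \<Longrightarrow> a \<noteq> b \<Longrightarrow> (\<integral>x. d a x * d b x \<partial>M) = \<gamma>"
    and sum_zero: "AE x in M. (\<Sum>a\<in>I. d a x) = 0"
  shows "(\<integral>x. (\<Sum>a\<in>A. d a x) ^ 2 \<partial>M) \<le> (\<Sum>a\<in>I. \<integral>x. d a x ^ 2 \<partial>M)"
proof -
  have expand: "(\<integral>x. (\<Sum>a\<in>B. d a x) ^ 2 \<partial>M)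
      = (\<Sum>a\<in>B. \<integral>x. d a x ^ 2 \<partial>M) + real (card B) * (real (card B) - 1) * \<gamma>"
    if "B \<subseteq> I" for B
    by (rule integral_sum_square_of_exchangeable) (use that I in \<open>auto intro: finite_subset int exch\<close>)
  define S where "S = (\<Sum>a\<in>I. \<integral>x. d a x ^ 2 \<partial>M)"
  have S_nonneg: "0 \<le> S"
    unfolding S_def by (intro sum_nonneg integral_nonneg) auto
  have "(\<integral>x. (\<Sum>a\<in>I. d a x) ^ 2 \<partial>M) = 0"
    using sum_zero by (intro integral_eq_zero_AE) auto
  \<comment> \<open>the vanishing total sum forces \<open>\<gamma> \<le> 0\<close>\<close>
  then have total: "S + real (card I) * (real (card I) - 1) * \<gamma> = 0"
    using expand[of I] by (simp add: S_def)
  have cross_nonpos: "real (card A) * (real (card A) - 1) * \<gamma> \<le> 0"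
  proof (cases "card A \<le> 1")
    case True
    then have "card A = 0 \<or> card A = 1"
      by linarith
    then show ?thesis
      by auto
  next
    case False
    then have "0 < real (card I) * (real (card I) - 1)"
      using card_mono[OF I A] by simp
    moreover have "real (card I) * (real (card I) - 1) * \<gamma> \<le> 0"
      using total S_nonneg by linarith
    ultimately have "\<gamma> \<le> 0"
      by (metis mult_le_cancel_left_pos mult_zero_right)
    moreover have "0 \<le> real (card A) * (real (card A) - 1)"
      using False by simp
    ultimately show ?thesis
      by (simp add: mult_nonneg_nonpos)
  qed
  have "(\<integral>x. (\<Sum>a\<in>A. d a x) ^ 2 \<partial>M) \<le> (\<Sum>a\<in>A. \<integral>x. d a x ^ 2 \<partial>M)"
    using expand[OF A] cross_nonpos by simp
  also have "\<dots> \<le> S"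
    unfolding S_def by (rule sum_mono2[OF I A]) auto
  finally show ?thesis
    unfolding S_def .
qed

lemma (in prob_space) prob_ex_norm_gt_le:
  fixes X :: "'i \<Rightarrow> 'a \<Rightarrow> 'b::real_normed_vector" and B :: real
  assumes I: "finite I" and \<epsilon>: "0 < \<epsilon>"
    and meas: "\<And>i. i \<in> I \<Longrightarrow> X i \<in> borel_measurable M"
    and int: "\<And>i. i \<in> I \<Longrightarrow> integrable M (\<lambda>x. norm (X i x) ^ 2)"
    and bound: "\<And>i. i \<in> I \<Longrightarrow> (\<integral>x. norm (X i x) ^ 2 \<partial>M) \<le> B"
  shows "prob {x \<in> space M. \<exists>i\<in>I. \<epsilon> < norm (X i x)} \<le> real (card I) * B / \<epsilon>\<^sup>2"
proof -
  define E where "E i = {x \<in> space M. \<epsilon>\<^sup>2 \<le> norm (X i x) ^ 2}" for i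
  have E_sets: "E i \<in> events" if "i \<in> I" for i
    using meas[OF that] unfolding E_def by measurable
  have "{x \<in> space M. \<exists>i\<in>I. \<epsilon> < norm (X i x)} \<subseteq> (\<Union>i\<in>I. E i)"
    using \<epsilon> by (auto simp: E_def intro!: power_mono)
  then have "prob {x \<in> space M. \<exists>i\<in>I. \<epsilon> < norm (X i x)} \<le> prob (\<Union>i\<in>I. E i)"
    using I E_sets by (intro finite_measure_mono) auto
  also have "\<dots> \<le> (\<Sum>i\<in>I. prob (E i))"
    using I E_sets by (rule measure_UNION_le)
  also have "\<dots> \<le> (\<Sum>i\<in>I. B / \<epsilon>\<^sup>2)"
  proof (rule sum_mono)
    fix i assume i: "i \<in> I"
    have "prob (E i) \<le> (\<integral>x. norm (X i x) ^ 2 \<partial>M) / \<epsilon>\<^sup>2"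
      unfolding E_def using \<epsilon> by (intro integral_Markov_inequality_measure[OF int[OF i], of "space M"]) auto
    also have "\<dots> \<le> B / \<epsilon>\<^sup>2"
      using bound[OF i] by (simp add: divide_right_mono)
    finally show "prob (E i) \<le> B / \<epsilon>\<^sup>2" .
  qed
  finally show ?thesis
    by simp
qed

lemma permutes_map_pair:
  assumes "a \<in> S" "b \<in> S" "a \<noteq> b" "a' \<in> S" "b' \<in> S" "a' \<noteq> b'"
  obtains s where "s permutes S" "s a' = a" "s b' = b"
proof
  define t where "t = Transposition.transpose a' a"
  have "t b' \<noteq> a"
    using assms by (auto simp: t_def Transposition.transpose_def)
  then show "(Transposition.transpose (t b') b \<circ> t) a' = a" "(Transposition.transpose (t b') b \<circ> t) b' = b"
    using assms by (auto simp: t_def)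
  have "t b' \<in> S"
    using assms by (auto simp: t_def Transposition.transpose_def)
  then show "Transposition.transpose (t b') b \<circ> t permutes S"
    using assms unfolding t_def by (intro permutes_compose permutes_swap_id)
qed

section \<open>Unitary conjugates of a real diagonal matrix\<close>

lemma unitary_cmat_column_norm:
  assumes "unitary_cmat N U" "p < N"
  shows "(\<Sum>k<N. cmod (U k p) ^ 2) = 1"
proof -
  have "complex_of_real (\<Sum>k<N. cmod (U k p) ^ 2) = (\<Sum>k<N. cnj (U k p) * U k p)"
    by (simp only: of_real_sum complex_of_real_cmod_square)
  also have "\<dots> = 1"
    using assms unfolding unitary_cmat_def by auto
  finally show ?thesis
    using of_real_eq_1_iff by blast
qed

lemma unitary_cmat_norm_entry_le_1:
  assumes "unitary_cmat N U"
  shows "cmod (U a p) \<le> 1"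
proof (cases "a < N \<and> p < N")
  case True
  have "cmod (U a p) ^ 2 \<le> (\<Sum>k<N. cmod (U k p) ^ 2)"
    by (rule member_le_sum) (use True in auto)
  then show ?thesis
    using unitary_cmat_column_norm[OF assms] True by (simp add: power_le_one_iff)
next
  case False
  then show ?thesis
    using assms unfolding unitary_cmat_def cmat_def by auto
qed

lemma norm_conj_diag_le:
  assumes "unitary_cmat N U"
  shows "cmod (conj_diag N U lam a b) \<le> (\<Sum>p<N. \<bar>lam p\<bar>)"
proof -
  have "cmod (U a p) * \<bar>lam p\<bar> * cmod (U b p) \<le> 1 * \<bar>lam p\<bar> * 1" for p
    using unitary_cmat_norm_entry_le_1[OF assms] by (intro mult_mono) auto
  then have "cmod (U a p * complex_of_real (lam p) * cnj (U b p)) \<le> \<bar>lam p\<bar>" for p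
    by (simp add: norm_mult)
  then have "cmod (\<Sum>p<N. U a p * complex_of_real (lam p) * cnj (U b p)) \<le> (\<Sum>p<N. \<bar>lam p\<bar>)"
    by (intro order_trans[OF norm_sum sum_mono])
  then show ?thesis
    unfolding conj_diag_def by (auto intro: order_trans[OF _ sum_nonneg])
qed

lemma Im_conj_diag_diagonal: "Im (conj_diag N U lam a a) = 0"
  by (simp add: conj_diag_def)

lemma Re_conj_diag_diagonal:
  assumes "a < N"
  shows "Re (conj_diag N U lam a a) = (\<Sum>p<N. lam p * cmod (U a p) ^ 2)"
proof -
  have "U a p * complex_of_real (lam p) * cnj (U a p) = complex_of_real (lam p * cmod (U a p) ^ 2)" for p
    by (metis complex_norm_square mult.commute mult.left_commute of_real_mult)
  then have "conj_diag N U lam a a = (\<Sum>p<N. complex_of_real (lam p * cmod (U a p) ^ 2))"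
    using assms unfolding conj_diag_def by (simp only: conj_absorb if_True)
  then show ?thesis
    by (simp only: Re_sum Re_complex_of_real)
qed

lemma trace_conj_diag:
  assumes "unitary_cmat N U"
  shows "(\<Sum>a<N. Re (conj_diag N U lam a a)) = (\<Sum>p<N. lam p)"
proof -
  have "(\<Sum>a<N. Re (conj_diag N U lam a a)) = (\<Sum>a<N. \<Sum>p<N. lam p * cmod (U a p) ^ 2)"
    by (simp add: Re_conj_diag_diagonal)
  also have "\<dots> = (\<Sum>p<N. lam p * (\<Sum>a<N. cmod (U a p) ^ 2))"
    by (subst sum.swap) (simp add: sum_distrib_left)
  finally show ?thesis
    using unitary_cmat_column_norm[OF assms] by simp
qed

lemma unitary_cmat_adjoint_isometry:
  assumes "unitary_cmat N U"
  shows "(\<Sum>b<N. cmod (\<Sum>p<N. x p * cnj (U b p)) ^ 2) = (\<Sum>p<N. cmod (x p) ^ 2)"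
proof -
  have orth: "(\<Sum>b<N. cnj (U b p) * U b q) = (if p = q then 1 else 0)" if "p < N" "q < N" for p q
    using assms that unfolding unitary_cmat_def by auto
  have "complex_of_real (\<Sum>b<N. cmod (\<Sum>p<N. x p * cnj (U b p)) ^ 2)
      = (\<Sum>b<N. \<Sum>p<N. \<Sum>q<N. x p * cnj (x q) * (cnj (U b p) * U b q))"
    by (simp only: of_real_sum complex_of_real_cmod_square)
       (simp add: sum_product algebra_simps)
  also have "\<dots> = (\<Sum>p<N. \<Sum>q<N. \<Sum>b<N. x p * cnj (x q) * (cnj (U b p) * U b q))"
    by (rule trans[OF sum.swap sum.cong[OF refl sum.swap]])
  also have "\<dots> = (\<Sum>p<N. x p * cnj (x p))"
    by (simp add: orth if_distrib[of "\<lambda>y. _ * y"] cong: if_cong flip: sum_distrib_left)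
  also have "\<dots> = complex_of_real (\<Sum>p<N. cmod (x p) ^ 2)"
    by (simp only: of_real_sum complex_of_real_cmod_square mult.commute)
  finally show ?thesis
    using of_real_eq_iff by blast
qed

lemma frobenius_conj_diag:
  assumes "unitary_cmat N U"
  shows "(\<Sum>a<N. \<Sum>b<N. cmod (conj_diag N U lam a b) ^ 2) = (\<Sum>p<N. lam p ^ 2)"
proof -
  have "(\<Sum>b<N. cmod (conj_diag N U lam a b) ^ 2) = (\<Sum>p<N. lam p ^ 2 * cmod (U a p) ^ 2)"
    if "a < N" for a
    using unitary_cmat_adjoint_isometry[OF assms, of "\<lambda>p. U a p * complex_of_real (lam p)"] that
    by (simp add: conj_diag_def norm_mult power_mult_distrib mult.commute)
  then have "(\<Sum>a<N. \<Sum>b<N. cmod (conj_diag N U lam a b) ^ 2) = (\<Sum>a<N. \<Sum>p<N. lam p ^ 2 * cmod (U a p) ^ 2)"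
    by simp
  also have "\<dots> = (\<Sum>p<N. lam p ^ 2 * (\<Sum>a<N. cmod (U a p) ^ 2))"
    by (subst sum.swap) (simp add: sum_distrib_left)
  finally show ?thesis
    using unitary_cmat_column_norm[OF assms] by simp
qed

lemma sum_norm_conj_diag_entries_le:
  assumes "unitary_cmat N U" and inj: "inj_on (\<lambda>i. (f i, g i)) I"
    and "\<And>i. i \<in> I \<Longrightarrow> f i < N" "\<And>i. i \<in> I \<Longrightarrow> g i < N"
  shows "(\<Sum>i\<in>I. cmod (conj_diag N U lam (f i) (g i)) ^ 2) \<le> (\<Sum>p<N. lam p ^ 2)"
proof -
  define h where "h ab = cmod (conj_diag N U lam (fst ab) (snd ab)) ^ 2" for ab
  have "(\<Sum>i\<in>I. cmod (conj_diag N U lam (f i) (g i)) ^ 2) = (\<Sum>ab\<in>(\<lambda>i. (f i, g i)) ` I. h ab)"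
    by (simp add: sum.reindex[OF inj] h_def)
  also have "\<dots> \<le> (\<Sum>ab\<in>{..<N} \<times> {..<N}. h ab)"
    by (rule sum_mono2) (use assms in \<open>auto simp: h_def\<close>)
  also have "\<dots> = (\<Sum>p<N. lam p ^ 2)"
    using frobenius_conj_diag[OF assms(1)] by (simp add: sum.cartesian_product h_def case_prod_beta)
  finally show ?thesis .
qed

definition diag_cmat :: "nat \<Rightarrow> (nat \<Rightarrow> complex) \<Rightarrow> nat \<Rightarrow> nat \<Rightarrow> complex" where
  "diag_cmat N u = (\<lambda>x y. if x < N \<and> y < N \<and> x = y then u x else 0)"

definition perm_cmat :: "nat \<Rightarrow> (nat \<Rightarrow> nat) \<Rightarrow> nat \<Rightarrow> nat \<Rightarrow> complex" where
  "perm_cmat N s = (\<lambda>x y. if x < N \<and> y < N \<and> y = s x then 1 else 0)"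

lemma unitary_diag_cmat:
  assumes "\<And>x. x < N \<Longrightarrow> cmod (u x) = 1"
  shows "unitary_cmat N (diag_cmat N u)"
  unfolding unitary_cmat_def
proof (intro conjI allI impI)
  show "cmat N (diag_cmat N u)"
    unfolding cmat_def diag_cmat_def by auto
  fix i j assume ij: "i < N" "j < N"
  have "(\<Sum>k<N. cnj (diag_cmat N u k i) * diag_cmat N u k j)
      = (\<Sum>k<N. if k = i then (if i = j then cnj (u i) * u i else 0) else 0)"
    using ij by (intro sum.cong refl) (auto simp: diag_cmat_def)
  then show "(\<Sum>k<N. cnj (diag_cmat N u k i) * diag_cmat N u k j) = (if i = j then 1 else 0)"
    using ij assms[of i] complex_of_real_cmod_square[of "u i"] by auto
qed

lemma unitary_perm_cmat:
  assumes "s permutes {..<N}"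
  shows "unitary_cmat N (perm_cmat N s)"
  unfolding unitary_cmat_def
proof (intro conjI allI impI)
  show "cmat N (perm_cmat N s)"
    unfolding cmat_def perm_cmat_def by auto
  have bij: "bij_betw s {..<N} {..<N}"
    by (rule permutes_imp_bij[OF assms])
  fix i j assume ij: "i < N" "j < N"
  have "(\<Sum>k<N. cnj (perm_cmat N s k i) * perm_cmat N s k j) = (\<Sum>k<N. (\<lambda>y. if y = i \<and> y = j then 1 else 0) (s k))"
    using ij by (intro sum.cong refl) (auto simp: perm_cmat_def)
  also have "\<dots> = (\<Sum>y<N. if y = i \<and> y = j then 1 else 0)"
    by (rule sum.reindex_bij_betw[OF bij])
  finally show "(\<Sum>k<N. cnj (perm_cmat N s k i) * perm_cmat N s k j) = (if i = j then 1 else 0)"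
    using ij by (simp add: conj_commute[of "_ = i"] cong: conj_cong)
qed

lemma cmat_mult_diag_cmat:
  "cmat_mult N (diag_cmat N u) U = (\<lambda>x p. if x < N \<and> p < N then u x * U x p else 0)"
  by (auto simp: cmat_mult_def diag_cmat_def if_distrib[of "\<lambda>y. y * _"] cong: if_cong)

lemma cmat_mult_perm_cmat:
  assumes "s permutes {..<N}"
  shows "cmat_mult N (perm_cmat N s) U = (\<lambda>x p. if x < N \<and> p < N then U (s x) p else 0)"
  using permutes_in_image[OF assms]
  by (auto simp: cmat_mult_def perm_cmat_def if_distrib[of "\<lambda>y. y * _"] cong: if_cong)

lemma conj_diag_diag_cmat_mult:
  assumes "x < N" "y < N"
  shows "conj_diag N (cmat_mult N (diag_cmat N u) U) lam x y = u x * cnj (u y) * conj_diag N U lam x y"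
  using assms unfolding conj_diag_def cmat_mult_diag_cmat
  by (auto simp: sum_distrib_left algebra_simps intro!: sum.cong)

lemma conj_diag_perm_cmat_mult:
  assumes "s permutes {..<N}" "x < N" "y < N"
  shows "conj_diag N (cmat_mult N (perm_cmat N s) U) lam x y = conj_diag N U lam (s x) (s y)"
  using assms permutes_in_image[OF assms(1)] unfolding conj_diag_def cmat_mult_perm_cmat[OF assms(1)]
  by (auto intro!: sum.cong)

lemma measurable_cmat_entry [measurable]:
  "(\<lambda>U::nat \<Rightarrow> nat \<Rightarrow> complex. U i p) \<in> borel_measurable borel"
  using measurable_comp[OF measurable_product_coordinates measurable_product_coordinates]
  by (simp add: comp_def)

lemma borel_measurable_cnj [measurable (raw)]:
  "f \<in> borel_measurable M \<Longrightarrow> (\<lambda>x. cnj (f x)) \<in> borel_measurable M"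
  by (erule measurable_compose) (intro borel_measurable_continuous_onI continuous_intros)

lemma measurable_cmat_mult: "cmat_mult N V \<in> borel_measurable borel"
  by (intro measurable_coordinatewise_then_product) (simp add: cmat_mult_def)

lemma measurable_conj_diag [measurable]: "(\<lambda>U. conj_diag N U lam a b) \<in> borel_measurable borel"
  by (simp add: conj_diag_def)

lemma block_index_less: "i < m \<Longrightarrow> k < n \<Longrightarrow> i * n + k < m * (n::nat)"
proof -
  assume "i < m" "k < n"
  then have "(i + 1) * n \<le> m * n"
    by (intro mult_le_mono1) simp
  then show ?thesis
    using \<open>k < n\<close> by simp
qed

lemma block_index_eq_iff: "k < n \<Longrightarrow> k' < n \<Longrightarrow> i * n + k = i' * n + k' \<longleftrightarrow> i = i' \<and> k = (k'::nat)"
  by (metis add_right_cancel mod_less mod_mult_self3 div_mult_self3 less_nat_zero_code)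

lemma pi2_entry: "j < n \<Longrightarrow> l < n \<Longrightarrow> pi2 m n H j l = (\<Sum>i<m. H (i * n + j) (i * n + l))"
  by (simp add: pi2_def)

lemma Im_pi2_conj_diag_diagonal: "Im (pi2 m n (conj_diag N U lam) j j) = 0"
  by (simp add: pi2_def Im_conj_diag_diagonal)

lemma pi2_divide: "pi2 m n (\<lambda>a b. H a b / x) j l = pi2 m n H j l / x"
  by (simp add: pi2_def sum_divide_distrib)

lemma norm_pi2_diagonal_deviation_square_le:
  assumes "0 < m"
  shows "cmod (pi2 m n (\<lambda>a b. conj_diag N U lam a b / of_nat m) j j - complex_of_real c) ^ 2
       \<le> 2 * (Re (pi2 m n (conj_diag N U lam) j j) - m * c') ^ 2 / (real m)\<^sup>2 + 2 * (c' - c)\<^sup>2"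
proof -
  define T where "T = Re (pi2 m n (conj_diag N U lam) j j) - m * c'"
  define e where "e = pi2 m n (conj_diag N U lam) j j / of_nat m - complex_of_real c"
  have "Re e = T / m + (c' - c)"
    using assms by (simp add: e_def T_def field_simps)
  moreover have "Im e = 0"
    by (simp add: e_def Im_pi2_conj_diag_diagonal)
  ultimately have "cmod e ^ 2 = (T / m + (c' - c)) ^ 2"
    by (simp add: cmod_power2)
  then show ?thesis
    using square_add_le[of "T / m" "c' - c"] by (simp add: e_def T_def pi2_divide power_divide)
qed

section \<open>Second moments under Haar measure\<close>

locale haar_unitary_space =
  fixes N :: nat and Q :: "(nat \<Rightarrow> nat \<Rightarrow> complex) measure"
  assumes haar_unitary: "haar_unitary N Q"
begin

sublocale prob_space Q
  using haar_unitary unfolding haar_unitary_def by auto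

lemma sets_eq_borel [measurable_cong]: "sets Q = sets borel"
  using haar_unitary unfolding haar_unitary_def by auto

lemma AE_unitary: "AE U in Q. unitary_cmat N U"
  using haar_unitary unfolding haar_unitary_def by auto

lemma measurable_borel: "g \<in> borel_measurable borel \<Longrightarrow> g \<in> borel_measurable Q"
  using measurable_cong_sets[OF sets_eq_borel refl] by blast

lemma integral_left_mult_invariant:
  fixes g :: "(nat \<Rightarrow> nat \<Rightarrow> complex) \<Rightarrow> real"
  assumes "unitary_cmat N V" "g \<in> borel_measurable borel"
  shows "(\<integral>U. g (cmat_mult N V U) \<partial>Q) = (\<integral>U. g U \<partial>Q)"
proof -
  have "cmat_mult N V \<in> measurable Q borel"
    using measurable_cmat_mult measurable_borel by blast
  then have "(\<integral>U. g (cmat_mult N V U) \<partial>Q) = integral\<^sup>L (distr Q borel (cmat_mult N V)) g"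
    by (simp add: integral_distr assms(2))
  also have "distr Q borel (cmat_mult N V) = Q"
    using haar_unitary assms(1) unfolding haar_unitary_def by auto
  finally show ?thesis .
qed

lemma integral_eq_0_if_odd:
  fixes g :: "(nat \<Rightarrow> nat \<Rightarrow> complex) \<Rightarrow> real"
  assumes "unitary_cmat N V" "g \<in> borel_measurable borel" "\<And>U. g (cmat_mult N V U) = - g U"
  shows "(\<integral>U. g U \<partial>Q) = 0"
  using integral_left_mult_invariant[OF assms(1,2)] by (simp add: assms(3))

lemma integrable_if_bounded_on_unitary:
  fixes g :: "(nat \<Rightarrow> nat \<Rightarrow> complex) \<Rightarrow> real"
  assumes "g \<in> borel_measurable borel" "\<And>U. unitary_cmat N U \<Longrightarrow> \<bar>g U\<bar> \<le> B"
  shows "integrable Q g"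
  using AE_unitary assms
  by (intro integrable_const_bound[where B=B] measurable_borel) (auto elim!: eventually_mono)

lemma integrable_Re_mult_cnj_conj_diag:
  "integrable Q (\<lambda>U. Re (conj_diag N U lam a b * cnj (conj_diag N U lam a' b')))"
proof (rule integrable_if_bounded_on_unitary)
  fix U assume "unitary_cmat N U"
  then have "cmod (conj_diag N U lam a b) * cmod (conj_diag N U lam a' b')
      \<le> (\<Sum>p<N. \<bar>lam p\<bar>) * (\<Sum>p<N. \<bar>lam p\<bar>)"
    by (intro mult_mono norm_conj_diag_le) auto
  then show "\<bar>Re (conj_diag N U lam a b * cnj (conj_diag N U lam a' b'))\<bar> \<le> (\<Sum>p<N. \<bar>lam p\<bar>) * (\<Sum>p<N. \<bar>lam p\<bar>)"
    by (intro order_trans[OF abs_Re_le_cmod]) (simp add: norm_mult)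
qed simp

lemma integral_norm_sum_offdiagonal_le:
  assumes I: "finite I" and inj: "inj_on f I" and disjoint: "\<And>i k. i \<in> I \<Longrightarrow> k \<in> I \<Longrightarrow> f i \<noteq> g k"
    and f: "\<And>i. i \<in> I \<Longrightarrow> f i < N" and g: "\<And>i. i \<in> I \<Longrightarrow> g i < N"
  shows "integrable Q (\<lambda>U. cmod (\<Sum>i\<in>I. conj_diag N U lam (f i) (g i)) ^ 2)"
    and "(\<integral>U. cmod (\<Sum>i\<in>I. conj_diag N U lam (f i) (g i)) ^ 2 \<partial>Q) \<le> (\<Sum>p<N. lam p ^ 2)"
proof -
  define z where "z i U = conj_diag N U lam (f i) (g i)" for i U
  define w where "w i k U = Re (z i U * cnj (z k U))" for i k U
  have int: "integrable Q (w i k)" for i k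
    unfolding w_def z_def by (rule integrable_Re_mult_cnj_conj_diag)
  have sum_eq: "cmod (\<Sum>i\<in>I. z i U) ^ 2 = (\<Sum>i\<in>I. \<Sum>k\<in>I. w i k U)" for U
    unfolding w_def by (rule cmod_sum_square)
  have cross: "(\<integral>U. w i k U \<partial>Q) = 0" if ik: "i \<in> I" "k \<in> I" "i \<noteq> k" for i k
  proof (rule integral_eq_0_if_odd)
    \<comment> \<open>flipping the sign of row \<open>f i\<close> negates \<open>z i\<close> and fixes \<open>z k\<close>\<close>
    define u where "u x = (if x = f i then -1 else 1 :: complex)" for x
    show "unitary_cmat N (diag_cmat N u)"
      by (rule unitary_diag_cmat) (simp add: u_def)
    show "w i k \<in> borel_measurable borel"
      unfolding w_def z_def by measurable
    have "f k \<noteq> f i"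
      using inj ik by (auto dest: inj_onD)
    then show "w i k (cmat_mult N (diag_cmat N u) U) = - w i k U" for U
      using disjoint[of i i] disjoint[of i k] f g ik
      by (simp add: w_def z_def conj_diag_diag_cmat_mult u_def)
  qed
  show "integrable Q (\<lambda>U. cmod (\<Sum>i\<in>I. z i U) ^ 2)"
    unfolding sum_eq by (simp add: int)
  have "(\<integral>U. cmod (\<Sum>i\<in>I. z i U) ^ 2 \<partial>Q) = (\<Sum>i\<in>I. \<Sum>k\<in>I. \<integral>U. w i k U \<partial>Q)"
    unfolding sum_eq by (simp add: int integrable_sum)
  also have "\<dots> = (\<Sum>i\<in>I. \<integral>U. w i i U \<partial>Q)"
    using I cross by (intro sum.cong refl) (auto simp: sum.remove intro!: sum.neutral)
  also have "\<dots> = (\<integral>U. (\<Sum>i\<in>I. w i i U) \<partial>Q)"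
    by (simp add: int integrable_sum)
  also have "\<dots> = (\<integral>U. (\<Sum>i\<in>I. cmod (z i U) ^ 2) \<partial>Q)"
    by (simp only: w_def cmod_square_eq_Re_mult_cnj)
  also have "\<dots> \<le> (\<integral>U. (\<Sum>p<N. lam p ^ 2) \<partial>Q)"
  proof (rule integral_mono_AE')
    have "inj_on (\<lambda>i. (f i, g i)) I"
      using inj by (auto simp: inj_on_def)
    note entries_le = sum_norm_conj_diag_entries_le[OF _ this f g]
    show "AE U in Q. (\<Sum>i\<in>I. cmod (z i U) ^ 2) \<le> (\<Sum>p<N. lam p ^ 2)"
      using AE_unitary by eventually_elim (simp add: z_def entries_le)
  qed (auto intro: sum_nonneg)
  finally show "(\<integral>U. cmod (\<Sum>i\<in>I. z i U) ^ 2 \<partial>Q) \<le> (\<Sum>p<N. lam p ^ 2)"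
    by (simp add: prob_space)
qed

lemma integral_diagonal_pair_exchangeable:
  fixes g :: "complex \<Rightarrow> real"
  assumes g [measurable]: "g \<in> borel_measurable borel"
    and ab: "a < N" "b < N" "a \<noteq> b" and ab': "a' < N" "b' < N" "a' \<noteq> b'"
  shows "(\<integral>U. g (conj_diag N U lam a a) * g (conj_diag N U lam b b) \<partial>Q)
       = (\<integral>U. g (conj_diag N U lam a' a') * g (conj_diag N U lam b' b') \<partial>Q)"
proof -
  obtain s where s: "s permutes {..<N}" "s a' = a" "s b' = b"
    using permutes_map_pair[of a "{..<N}" b a' b'] ab ab' by auto
  have "(\<integral>U. g (conj_diag N U lam a' a') * g (conj_diag N U lam b' b') \<partial>Q)
      = (\<integral>U. g (conj_diag N (cmat_mult N (perm_cmat N s) U) lam a' a')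
             * g (conj_diag N (cmat_mult N (perm_cmat N s) U) lam b' b') \<partial>Q)"
    by (rule integral_left_mult_invariant[symmetric, OF unitary_perm_cmat[OF s(1)]]) measurable
  also have "\<dots> = (\<integral>U. g (conj_diag N U lam a a) * g (conj_diag N U lam b b) \<partial>Q)"
    using s ab' by (simp add: conj_diag_perm_cmat_mult)
  finally show ?thesis ..
qed

lemma integral_sum_diagonal_deviation_le:
  fixes lam :: "nat \<Rightarrow> real"
  assumes A: "A \<subseteq> {..<N}"
  defines "c \<equiv> (\<Sum>p<N. lam p) / N"
  shows "integrable Q (\<lambda>U. (\<Sum>a\<in>A. Re (conj_diag N U lam a a) - c) ^ 2)"
    and "(\<integral>U. (\<Sum>a\<in>A. Re (conj_diag N U lam a a) - c) ^ 2 \<partial>Q) \<le> (\<Sum>p<N. lam p ^ 2)"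
proof -
  define d where "d a U = Re (conj_diag N U lam a a) - c" for a U
  have int: "integrable Q (\<lambda>U. d a U * d b U)" for a b
  proof (rule integrable_if_bounded_on_unitary)
    fix U assume U: "unitary_cmat N U"
    have "\<bar>d a U\<bar> \<le> (\<Sum>p<N. \<bar>lam p\<bar>) + \<bar>c\<bar>" for a
      using abs_Re_le_cmod[of "conj_diag N U lam a a"] norm_conj_diag_le[OF U, of lam a a]
      unfolding d_def by linarith
    then show "\<bar>d a U * d b U\<bar> \<le> ((\<Sum>p<N. \<bar>lam p\<bar>) + \<bar>c\<bar>) * ((\<Sum>p<N. \<bar>lam p\<bar>) + \<bar>c\<bar>)"
      unfolding abs_mult by (intro mult_mono) auto
  qed (simp add: d_def)
  have exchangeable: "(\<integral>U. d a U * d b U \<partial>Q) = (\<integral>U. d 0 U * d 1 U \<partial>Q)"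
    if "a \<in> {..<N}" "b \<in> {..<N}" "a \<noteq> b" for a b
    using that unfolding d_def
    by (intro integral_diagonal_pair_exchangeable[where g = "\<lambda>z. Re z - c"]) auto
  have trace: "(\<Sum>a<N. Re (conj_diag N U lam a a)) = real N * c" if "unitary_cmat N U" for U
    using trace_conj_diag[OF that] by (cases "N = 0") (simp_all add: c_def)
  have sum_zero: "AE U in Q. (\<Sum>a<N. d a U) = 0"
    using AE_unitary by eventually_elim (simp add: d_def sum_subtractf trace)
  have total: "AE U in Q. (\<Sum>a<N. d a U ^ 2) \<le> (\<Sum>p<N. lam p ^ 2)"
    using AE_unitary
  proof eventually_elim
    case (elim U)
    have "(\<Sum>a<N. d a U ^ 2) \<le> (\<Sum>a<N. Re (conj_diag N U lam a a) ^ 2)"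
      unfolding d_def by (rule sum_square_deviation_le) (simp add: trace[OF elim])
    also have "\<dots> \<le> (\<Sum>a<N. cmod (conj_diag N U lam a a) ^ 2)"
      by (intro sum_mono) (simp add: cmod_power2)
    also have "\<dots> \<le> (\<Sum>p<N. lam p ^ 2)"
      by (rule sum_norm_conj_diag_entries_le[OF elim]) (auto simp: inj_on_def)
    finally show ?case .
  qed
  have "(\<integral>U. (\<Sum>a\<in>A. d a U) ^ 2 \<partial>Q) \<le> (\<Sum>a<N. \<integral>U. d a U ^ 2 \<partial>Q)"
    by (rule integral_sum_square_le_of_exchangeable[OF _ A int exchangeable sum_zero]) auto
  also have "\<dots> = (\<integral>U. (\<Sum>a<N. d a U ^ 2) \<partial>Q)"
    using int by (simp add: power2_eq_square integrable_sum)
  also have "\<dots> \<le> (\<integral>U. (\<Sum>p<N. lam p ^ 2) \<partial>Q)"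
    by (rule integral_mono_AE'[OF _ total]) (auto intro: sum_nonneg)
  finally show "(\<integral>U. (\<Sum>a\<in>A. Re (conj_diag N U lam a a) - c) ^ 2 \<partial>Q) \<le> (\<Sum>p<N. lam p ^ 2)"
    by (simp add: d_def prob_space)
  show "integrable Q (\<lambda>U. (\<Sum>a\<in>A. Re (conj_diag N U lam a a) - c) ^ 2)"
    using integral_sum_square(1)[of A Q d] int A finite_subset unfolding d_def by blast
qed

lemma integral_pi2_offdiagonal_entry_le:
  assumes N: "N = m * n" and jl: "j < n" "l < n" "j \<noteq> l"
  shows "integrable Q (\<lambda>U. cmod (pi2 m n (conj_diag N U lam) j l) ^ 2)"
    and "(\<integral>U. cmod (pi2 m n (conj_diag N U lam) j l) ^ 2 \<partial>Q) \<le> (\<Sum>p<N. lam p ^ 2)"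
  using integral_norm_sum_offdiagonal_le[of "{..<m}" "\<lambda>i. i * n + j" "\<lambda>i. i * n + l" lam]
  using jl by (simp_all add: N pi2_entry block_index_less block_index_eq_iff inj_on_def)

lemma integral_pi2_diagonal_entry_deviation_le:
  fixes lam :: "nat \<Rightarrow> real"
  assumes N: "N = m * n" and j: "j < n"
  defines "c \<equiv> (\<Sum>p<N. lam p) / N"
  shows "integrable Q (\<lambda>U. (Re (pi2 m n (conj_diag N U lam) j j) - m * c) ^ 2)"
    and "(\<integral>U. (Re (pi2 m n (conj_diag N U lam) j j) - m * c) ^ 2 \<partial>Q) \<le> (\<Sum>p<N. lam p ^ 2)"
proof -
  have inj: "inj_on (\<lambda>i. i * n + j) {..<m}"
    using j by (simp add: inj_on_def block_index_eq_iff)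
  have "(\<Sum>a\<in>(\<lambda>i. i * n + j) ` {..<m}. Re (conj_diag N U lam a a) - c)
      = Re (pi2 m n (conj_diag N U lam) j j) - m * c" for U
    using j card_image[OF inj] by (simp add: sum.reindex[OF inj] sum_subtractf pi2_entry)
  moreover have "(\<lambda>i. i * n + j) ` {..<m} \<subseteq> {..<N}"
    using j by (auto simp: N block_index_less)
  note integral_sum_diagonal_deviation_le[OF this, of lam, folded c_def]
  ultimately show "integrable Q (\<lambda>U. (Re (pi2 m n (conj_diag N U lam) j j) - m * c) ^ 2)"
    and "(\<integral>U. (Re (pi2 m n (conj_diag N U lam) j j) - m * c) ^ 2 \<partial>Q) \<le> (\<Sum>p<N. lam p ^ 2)"
    by simp_all
qed

lemma integral_pi2_entry_deviation_le:
  fixes lam :: "nat \<Rightarrow> real" and c :: real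
  assumes N: "N = m * n" and m: "0 < m" and jl: "j < n" "l < n"
  defines "e \<equiv> \<lambda>U. pi2 m n (\<lambda>a b. conj_diag N U lam a b / of_nat m) j l
                   - (if j = l then complex_of_real c else 0)"
  shows "integrable Q (\<lambda>U. cmod (e U) ^ 2)"
    and "(\<integral>U. cmod (e U) ^ 2 \<partial>Q) \<le> 2 * (\<Sum>p<N. lam p ^ 2) / (real m)\<^sup>2 + 2 * ((\<Sum>p<N. lam p) / N - c)\<^sup>2"
proof -
  define cN where "cN = (\<Sum>p<N. lam p) / N"
  define B where "B = 2 * (\<Sum>p<N. lam p ^ 2) / (real m)\<^sup>2 + 2 * (cN - c)\<^sup>2"
  have "integrable Q (\<lambda>U. cmod (e U) ^ 2) \<and> (\<integral>U. cmod (e U) ^ 2 \<partial>Q) \<le> B"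
  proof (cases "j = l")
    case False
    note off = integral_pi2_offdiagonal_entry_le[OF N jl False, of lam]
    have e_sq: "cmod (e U) ^ 2 = cmod (pi2 m n (conj_diag N U lam) j l) ^ 2 / (real m)\<^sup>2" for U
      using False by (simp add: e_def pi2_divide norm_divide power_divide)
    have "0 \<le> (\<Sum>p<N. lam p ^ 2) / (real m)\<^sup>2"
      by (simp add: sum_nonneg)
    then have "(\<Sum>p<N. lam p ^ 2) / (real m)\<^sup>2 \<le> B"
      unfolding B_def times_divide_eq_right[symmetric] using zero_le_power2[of "cN - c"] by linarith
    then show ?thesis
      using off unfolding e_sq by (auto intro: order_trans[OF divide_right_mono])
  next
    case True
    define T where "T U = Re (pi2 m n (conj_diag N U lam) j j) - m * cN" for U
    have T_int: "integrable Q (\<lambda>U. T U ^ 2)" and T_le: "(\<integral>U. T U ^ 2 \<partial>Q) \<le> (\<Sum>p<N. lam p ^ 2)"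
      using integral_pi2_diagonal_entry_deviation_le[OF N jl(1), of lam] by (simp_all add: T_def cN_def)
    have bound: "cmod (e U) ^ 2 \<le> 2 * T U ^ 2 / (real m)\<^sup>2 + 2 * (cN - c)\<^sup>2" for U
      using norm_pi2_diagonal_deviation_square_le[OF m] True by (simp add: e_def T_def)
    have int_bound: "integrable Q (\<lambda>U. 2 * T U ^ 2 / (real m)\<^sup>2 + 2 * (cN - c)\<^sup>2)"
      using T_int by simp
    have "integrable Q (\<lambda>U. cmod (e U) ^ 2)"
    proof (rule Bochner_Integration.integrable_bound[OF int_bound])
      show "(\<lambda>U. cmod (e U) ^ 2) \<in> borel_measurable Q"
        by (simp add: e_def pi2_def)
      show "AE U in Q. norm (cmod (e U) ^ 2) \<le> norm (2 * T U ^ 2 / (real m)\<^sup>2 + 2 * (cN - c)\<^sup>2)"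
        by (intro AE_I2) (simp add: bound)
    qed
    moreover have "(\<integral>U. cmod (e U) ^ 2 \<partial>Q) \<le> (\<integral>U. 2 * T U ^ 2 / (real m)\<^sup>2 + 2 * (cN - c)\<^sup>2 \<partial>Q)"
      by (intro integral_mono[OF calculation int_bound bound])
    moreover have "\<dots> \<le> B"
      using T_int T_le by (simp add: B_def prob_space divide_right_mono)
    ultimately show ?thesis
      by simp
  qed
  then show "integrable Q (\<lambda>U. cmod (e U) ^ 2)"
    and "(\<integral>U. cmod (e U) ^ 2 \<partial>Q) \<le> 2 * (\<Sum>p<N. lam p ^ 2) / (real m)\<^sup>2 + 2 * ((\<Sum>p<N. lam p) / N - c)\<^sup>2"
    by (simp_all add: B_def cN_def)
qed

end

lemma prob_pi2_deviation_gt_le: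
  fixes P :: "'w measure" and Um :: "'w \<Rightarrow> nat \<Rightarrow> nat \<Rightarrow> complex" and lam :: "nat \<Rightarrow> real"
  assumes P: "prob_space P" and Um: "Um \<in> borel_measurable P"
    and haar: "haar_unitary (m * n) (distr P borel Um)" and m: "0 < m" and \<epsilon>: "0 < \<epsilon>"
    and bounded: "\<And>p. p < m * n \<Longrightarrow> \<bar>lam p\<bar> \<le> K"
  shows "measure P {\<omega> \<in> space P. \<exists>j<n. \<exists>l<n.
            cmod (pi2 m n (\<lambda>a b. conj_diag (m * n) (Um \<omega>) lam a b / of_nat m) j l
                  - (if j = l then complex_of_real c else 0)) > \<epsilon>}
         \<le> real (n * n) * (2 * (n * K\<^sup>2) / m + 2 * ((\<Sum>p<m * n. lam p) / real (m * n) - c)\<^sup>2) / \<epsilon>\<^sup>2"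
proof -
  interpret P: prob_space P
    by (rule P)
  interpret Q: haar_unitary_space "m * n" "distr P borel Um"
    by unfold_locales (rule haar)
  define e where "e U jl = pi2 m n (\<lambda>a b. conj_diag (m * n) U lam a b / of_nat m) (fst jl) (snd jl)
      - (if fst jl = snd jl then complex_of_real c else 0)" for U jl
  define B where "B = 2 * (n * K\<^sup>2) / m + 2 * ((\<Sum>p<m * n. lam p) / real (m * n) - c)\<^sup>2"
  have "2 * (\<Sum>p<m * n. lam p ^ 2) / (real m)\<^sup>2 \<le> 2 * (real (m * n) * K\<^sup>2) / (real m)\<^sup>2"
    using sum_power2_le_of_abs_le[where x = lam and N = "m * n", OF bounded] by (simp add: divide_right_mono)
  also have "\<dots> = 2 * (n * K\<^sup>2) / m"
    using m by (simp add: power2_eq_square)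
  finally have second_moment_le: "2 * (\<Sum>p<m * n. lam p ^ 2) / (real m)\<^sup>2
      + 2 * ((\<Sum>p<m * n. lam p) / real (m * n) - c)\<^sup>2 \<le> B"
    by (simp add: B_def)
  have "{\<omega> \<in> space P. \<exists>j<n. \<exists>l<n.
            cmod (pi2 m n (\<lambda>a b. conj_diag (m * n) (Um \<omega>) lam a b / of_nat m) j l
                  - (if j = l then complex_of_real c else 0)) > \<epsilon>}
      = {\<omega> \<in> space P. \<exists>jl\<in>{..<n} \<times> {..<n}. \<epsilon> < norm (e (Um \<omega>) jl)}"
    by (auto simp: e_def)
  also have "P.prob \<dots> \<le> real (card ({..<n} \<times> {..<n})) * B / \<epsilon>\<^sup>2"
  proof (rule P.prob_ex_norm_gt_le[OF _ \<epsilon>])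
    fix jl assume "jl \<in> {..<n} \<times> {..<n}"
    then have moment: "integrable (distr P borel Um) (\<lambda>U. cmod (e U jl) ^ 2)"
      "(\<integral>U. cmod (e U jl) ^ 2 \<partial>distr P borel Um) \<le> 2 * (\<Sum>p<m * n. lam p ^ 2) / (real m)\<^sup>2
         + 2 * ((\<Sum>p<m * n. lam p) / real (m * n) - c)\<^sup>2"
      using Q.integral_pi2_entry_deviation_le[OF refl m, of "fst jl" "snd jl" lam c] by (auto simp: e_def)
    have [measurable]: "(\<lambda>U. e U jl) \<in> borel_measurable borel"
      by (simp add: e_def pi2_def)
    show "(\<lambda>\<omega>. e (Um \<omega>) jl) \<in> borel_measurable P"
      using Um by measurable
    show "integrable P (\<lambda>\<omega>. norm (e (Um \<omega>) jl) ^ 2)"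
      using moment(1) Um by (simp add: integrable_distr_eq)
    show "(\<integral>\<omega>. norm (e (Um \<omega>) jl) ^ 2 \<partial>P) \<le> B"
      using moment(2) second_moment_le Um by (simp add: integral_distr)
  qed simp
  finally show ?thesis
    by (simp add: B_def)
qed

lemma prob_pi2_deviation_tendsto_0:
  fixes P :: "'w measure" and U :: "nat \<Rightarrow> 'w \<Rightarrow> nat \<Rightarrow> nat \<Rightarrow> complex" and lam :: "nat \<Rightarrow> nat \<Rightarrow> real"
  assumes P: "prob_space P" and m0: "1 \<le> m0"
    and U_meas: "\<And>m. m \<ge> m0 \<Longrightarrow> U m \<in> borel_measurable P"
    and U_haar: "\<And>m. m \<ge> m0 \<Longrightarrow> haar_unitary (m * n) (distr P borel (U m))"
    and bounded: "\<And>m p. m \<ge> m0 \<Longrightarrow> p < m * n \<Longrightarrow> \<bar>lam m p\<bar> \<le> K"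
    and mean: "(\<lambda>m. (\<Sum>p<m * n. lam m p) / real (m * n)) \<longlonglongrightarrow> c"
  shows "\<forall>\<epsilon>>0. (\<lambda>m. measure P {\<omega> \<in> space P. \<exists>j<n. \<exists>l<n.
            cmod (pi2 m n (\<lambda>a b. conj_diag (m * n) (U m \<omega>) (lam m) a b / of_nat m) j l
                  - (if j = l then complex_of_real c else 0)) > \<epsilon>}) \<longlonglongrightarrow> 0"
    (is "\<forall>\<epsilon>>0. ?prob \<epsilon> \<longlonglongrightarrow> 0")
proof (intro allI impI)
  fix \<epsilon> :: real assume \<epsilon>: "0 < \<epsilon>"
  define mean where "mean m = (\<Sum>p<m * n. lam m p) / real (m * n)" for m
  define b where "b m = real (n * n) * (2 * (n * K\<^sup>2) / m + 2 * (mean m - c)\<^sup>2) / \<epsilon>\<^sup>2" for m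
  have "\<forall>\<^sub>F m in sequentially. ?prob \<epsilon> m \<le> b m"
    using eventually_ge_at_top[of m0]
  proof eventually_elim
    case (elim m)
    then show ?case
      unfolding b_def mean_def using m0 \<epsilon>
      by (intro prob_pi2_deviation_gt_le[OF P U_meas[OF elim] U_haar[OF elim]] bounded[OF elim]) simp_all
  qed
  moreover have "b \<longlonglongrightarrow> 0"
    unfolding b_def using mean[folded mean_def] \<epsilon> by (auto intro!: tendsto_eq_intros)
  ultimately show "?prob \<epsilon> \<longlonglongrightarrow> 0"
    by (intro tendsto_sandwich[OF always_eventually[OF allI[OF measure_nonneg]] _ tendsto_const])
qed

section \<open>Means of weakly convergent empirical measures\<close>

lemma (in real_distribution) borel_measurable_if_isCont:
  fixes f :: "real \<Rightarrow> real"
  assumes "\<And>x. isCont f x"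
  shows "f \<in> borel_measurable M"
proof -
  have "f \<in> borel_measurable borel"
    using assms by (intro borel_measurable_continuous_onI continuous_at_imp_continuous_on) auto
  then show ?thesis
    by (simp add: measurable_cong_sets[OF events_eq_borel refl])
qed

lemma weak_conv_imp_AE_abs_le:
  fixes E :: "nat \<Rightarrow> real measure" and K :: real
  assumes E: "\<And>k. real_distribution (E k)" and \<mu>: "real_distribution \<mu>"
    and conv: "weak_conv_m E \<mu>" and bounded: "\<And>k. AE x in E k. \<bar>x\<bar> \<le> K"
  shows "AE x in \<mu>. \<bar>x\<bar> \<le> K"
proof -
  interpret \<mu>: real_distribution \<mu>
    by (rule \<mu>)
  \<comment> \<open>test against the continuous distance to \<open>[-K, K]\<close>, capped at 1\<close>
  define g where "g x = min 1 (max 0 (\<bar>x\<bar> - K))" for x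
  have g_cont: "isCont g x" for x
    unfolding g_def by (intro continuous_intros)
  have "(\<integral>x. g x \<partial>E k) = 0" for k
    using bounded[of k] by (intro integral_eq_zero_AE) (auto simp: g_def elim!: eventually_mono)
  moreover have "(\<lambda>k. \<integral>x. g x \<partial>E k) \<longlonglongrightarrow> (\<integral>x. g x \<partial>\<mu>)"
    using E \<mu> conv g_cont by (rule weak_conv_imp_integral_bdd_continuous_conv[where B = 1]) (simp add: g_def)
  ultimately have "(\<integral>x. g x \<partial>\<mu>) = 0"
    by (simp add: LIMSEQ_const_iff)
  moreover have "integrable \<mu> g"
    using \<mu>.borel_measurable_if_isCont[OF g_cont]
    by (intro \<mu>.integrable_const_bound[where B=1]) (auto simp: g_def)
  ultimately have "AE x in \<mu>. g x = 0"
    by (subst (asm) integral_nonneg_eq_0_iff_AE) (auto simp: g_def)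
  then show ?thesis
    by (auto simp: g_def elim!: eventually_mono)
qed

lemma weak_conv_imp_mean_conv_if_bounded:
  fixes E :: "nat \<Rightarrow> real measure" and K :: real
  assumes E: "\<And>k. real_distribution (E k)" and \<mu>: "real_distribution \<mu>"
    and conv: "weak_conv_m E \<mu>" and bounded: "\<And>k. AE x in E k. \<bar>x\<bar> \<le> K"
  shows "(\<lambda>k. \<integral>x. x \<partial>E k) \<longlonglongrightarrow> (\<integral>x. x \<partial>\<mu>)"
proof -
  define f where "f x = max (- K) (min K x)" for x
  have f_cont: "isCont f x" for x
    unfolding f_def by (intro continuous_intros)
  have f_id: "f x = x" if "\<bar>x\<bar> \<le> K" for x
    using that by (auto simp: f_def)
  have "(\<integral>x. f x \<partial>M) = (\<integral>x. x \<partial>M)" if "real_distribution M" "AE x in M. \<bar>x\<bar> \<le> K" for M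
    using that real_distribution.borel_measurable_if_isCont[OF that(1) f_cont]
      measurable_ident_sets[OF real_distribution.events_eq_borel[OF that(1)]]
    by (intro integral_cong_AE) (auto simp: f_id elim!: eventually_mono)
  moreover have "(\<lambda>k. \<integral>x. f x \<partial>E k) \<longlonglongrightarrow> (\<integral>x. f x \<partial>\<mu>)"
    using E \<mu> conv f_cont by (rule weak_conv_imp_integral_bdd_continuous_conv[where B = "\<bar>K\<bar>"]) (auto simp: f_def)
  ultimately show ?thesis
    using E \<mu> bounded weak_conv_imp_AE_abs_le[OF E \<mu> conv bounded] by simp
qed

lemma integral_emp_measure:
  assumes "0 < N"
  shows "(\<integral>x. f x \<partial>emp_measure N l) = (\<Sum>p<N. f (l p)) / N"
proof -
  have "{..<N} \<noteq> {}"
    using assms by auto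
  then show ?thesis
    unfolding emp_measure_def by (simp add: integral_pmf_of_set)
qed

lemma AE_emp_measure_iff:
  assumes "0 < N"
  shows "(AE x in emp_measure N l. P x) \<longleftrightarrow> (\<forall>p<N. P (l p))"
proof -
  have "{..<N} \<noteq> {}"
    using assms by auto
  then show ?thesis
    unfolding emp_measure_def by (auto simp: AE_measure_pmf_iff)
qed

lemma emp_mean_conv_if_weak_conv:
  fixes Nk :: "nat \<Rightarrow> nat" and l :: "nat \<Rightarrow> nat \<Rightarrow> real" and K :: real
  assumes Nk: "\<And>k. 0 < Nk k" and bounded: "\<And>k p. p < Nk k \<Longrightarrow> \<bar>l k p\<bar> \<le> K"
    and \<mu>: "real_distribution \<mu>" and conv: "weak_conv_m (\<lambda>k. emp_measure (Nk k) (l k)) \<mu>"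
  shows "(\<lambda>k. (\<Sum>p<Nk k. l k p) / Nk k) \<longlonglongrightarrow> moment \<mu> 1"
proof -
  \<comment> \<open>\<open>emp_measure\<close> carries the discrete \<sigma>-algebra of a pmf; pass to its Borel restriction\<close>
  define E where "E k = distr (emp_measure (Nk k) (l k)) borel (\<lambda>x. x)" for k
  have [measurable]: "(\<lambda>x. x) \<in> measurable (emp_measure (Nk k) (l k)) borel" for k
    by (simp add: emp_measure_def)
  have E: "real_distribution (E k)" for k
  proof -
    have "prob_space (E k)"
      unfolding E_def emp_measure_def by (intro prob_space.prob_space_distr prob_space_measure_pmf) simp
    then show ?thesis
      by (simp add: real_distribution_def real_distribution_axioms_def E_def)
  qed
  have "cdf (E k) = cdf (emp_measure (Nk k) (l k))" for k
    by (auto simp: cdf_def E_def measure_distr emp_measure_def)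
  then have "weak_conv_m E \<mu>"
    using conv by (simp add: weak_conv_m_def)
  moreover have "AE x in E k. \<bar>x\<bar> \<le> K" for k
    unfolding E_def using bounded Nk by (subst AE_distr_iff) (auto simp: AE_emp_measure_iff)
  ultimately have "(\<lambda>k. \<integral>x. x \<partial>E k) \<longlonglongrightarrow> (\<integral>x. x \<partial>\<mu>)"
    by (intro weak_conv_imp_mean_conv_if_bounded[OF E \<mu>])
  moreover have "(\<integral>x. x \<partial>E k) = (\<Sum>p<Nk k. l k p) / Nk k" for k
    using Nk by (simp add: E_def integral_distr integral_emp_measure)
  ultimately show ?thesis
    by (simp add: moment_def)
qed

theorem theorem4p5:
  fixes n m0 :: nat and lam :: "nat \<Rightarrow> nat \<Rightarrow> real"
    and K C :: real and \<mu> :: "real measure"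
    and P :: "'w measure" and U :: "nat \<Rightarrow> 'w \<Rightarrow> (nat \<Rightarrow> nat \<Rightarrow> complex)"
  assumes n: "n \<ge> 2" and m0: "m0 \<ge> 1"
    and P: "prob_space P"
    and U_meas: "\<And>m. m \<ge> m0 \<Longrightarrow> U m \<in> borel_measurable P"
    and U_haar: "\<And>m. m \<ge> m0 \<Longrightarrow> haar_unitary (m*n) (distr P borel (U m))"
    and supp: "\<And>m. m \<ge> m0 \<Longrightarrow> AE x in emp_measure (m*n) (lam m). -K \<le> x \<and> x \<le> K"
    and mom: "\<And>m r. m \<ge> m0 \<Longrightarrow> \<bar>moment (emp_measure (m*n) (lam m)) r\<bar> < C"
    and mu: "real_distribution \<mu>"
    and conv: "weak_conv_m (\<lambda>k. emp_measure ((k+m0)*n) (lam (k+m0))) \<mu>"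
  shows "\<forall>\<epsilon>>0. (\<lambda>m. measure P {\<omega> \<in> space P. \<exists>j<n. \<exists>l<n.
            cmod (pi2 m n (\<lambda>a b. conj_diag (m*n) (U m \<omega>) (lam m) a b / of_nat m) j l
                  - (if j = l then complex_of_real (moment \<mu> 1) else 0)) > \<epsilon>})
          \<longlonglongrightarrow> 0"
proof -
  have bounded: "\<bar>lam m p\<bar> \<le> K" if "m0 \<le> m" "p < m * n" for m p
  proof -
    have "0 < m * n"
      using that(2) by linarith
    then show ?thesis
      using supp[OF that(1)] that(2) by (auto simp: AE_emp_measure_iff abs_le_iff)
  qed
  have "(\<lambda>k. (\<Sum>p<(k + m0) * n. lam (k + m0) p) / real ((k + m0) * n)) \<longlonglongrightarrow> moment \<mu> 1"
    using m0 n bounded by (intro emp_mean_conv_if_weak_conv[where K = K, OF _ _ mu conv]) auto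
  then have "(\<lambda>m. (\<Sum>p<m * n. lam m p) / real (m * n)) \<longlonglongrightarrow> moment \<mu> 1"
    by (rule LIMSEQ_offset)
  then show ?thesis
    using prob_pi2_deviation_tendsto_0[OF P m0 U_meas U_haar bounded] by simp
qed

end
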